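(* Let $k\ge1$ and let $f:\mathbb{N}^k\to\mathbb{N}$ be bad. Then $f\notin\mathscr{C}_{I_{\bar d=0}}$.
   Context: $\mathbb{N}=\{0,1,2,\dots\}$. For $A\subseteq\mathbb{N}$, $\bar d(A)=\limsup_{n\to\infty}\frac{|A\cap[0,n)|}{n}$. $\mathscr{C}_{I_{\bar d=0}}$ is the set of all finitary functions $f:\mathbb{N}^k\to\mathbb{N}$ ($k\ge1$) such that $\bar d(f[A^k])=0$ whenever $\bar d(A)=0$. A function $f:\mathbb{N}^k\to\mathbb{N}$ is called bad if there exists a rational $\varepsilon>0$ such that for every $i\in\mathbb{N}$ there are $n,t\ge i$ and $A\subseteq[i,n)$ with $|A\cap[0,r)|\le\frac{r}{2^i}$ for all $r\in\mathbb{N}$ and $|f[A^k]\cap[0,t)|\ge\varepsilon t$. *)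

theory Defs
  imports "HOL-Analysis.Analysis"
begin

text \<open>Functions N^k -> N are represented as f :: nat list => nat, where only
  argument lists of length k matter.\<close>

definition upper_density :: "nat set \<Rightarrow> ereal" where
  "upper_density A = limsup (\<lambda>n. ereal (real (card (A \<inter> {..<n})) / real n))"

definition cart_power :: "nat set \<Rightarrow> nat \<Rightarrow> nat list set" where
  "cart_power A k = {xs. length xs = k \<and> set xs \<subseteq> A}"

definition in_C_dbar0 :: "nat \<Rightarrow> (nat list \<Rightarrow> nat) \<Rightarrow> bool" where
  "in_C_dbar0 k f \<longleftrightarrow> k \<ge> 1 \<and>
     (\<forall>A. upper_density A = 0 \<longrightarrow> upper_density (f ` cart_power A k) = 0)"

definition bad :: "nat \<Rightarrow> (nat list \<Rightarrow> nat) \<Rightarrow> bool" where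
  "bad k f \<longleftrightarrow> (\<exists>\<epsilon>::real. \<epsilon> \<in> \<rat> \<and> \<epsilon> > 0 \<and>
     (\<forall>i::nat. \<exists>n t A. n \<ge> i \<and> t \<ge> i \<and> A \<subseteq> {i..<n} \<and>
        (\<forall>r::nat. real (card (A \<inter> {..<r})) \<le> real r / 2 ^ i) \<and>
        real (card (f ` cart_power A k \<inter> {..<t})) \<ge> \<epsilon> * real t))"

end

theory Submission
  imports Defs
begin

text \<open>Take \<open>\<epsilon>\<close> from badness and, for each \<open>i\<close>, a finite set \<open>S i \<subseteq> [i, n)\<close> with at most
  \<open>r / 2^i\<close> elements below every \<open>r\<close>, whose image \<open>f[(S i)^k]\<close> fills a fraction \<open>\<epsilon>\<close> of some
  \<open>[0, t)\<close> with \<open>t \<ge> i\<close>. The union \<open>A\<close> of all \<open>S i\<close> has upper density zero: below \<open>r\<close> the sets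
  with \<open>i \<ge> m\<close> contribute at most \<open>\<Sum>\<^sub>i\<^sub>\<ge>\<^sub>m r / 2^i = 2 r / 2^m\<close> elements, and the finitely many
  with \<open>i < m\<close> are negligible as \<open>r \<rightarrow> \<infinity>\<close>. Yet \<open>f[A^k]\<close> contains every \<open>f[(S i)^k]\<close>, so it
  fills a fraction \<open>\<epsilon>\<close> of arbitrarily long initial segments.\<close>

lemma sum_power_atLeastLessThan_le:
  fixes x :: real
  assumes "0 \<le> x" "x < 1"
  shows "(\<Sum>i\<in>{m..<r}. x ^ i) \<le> x ^ m / (1 - x)"
proof -
  have "(\<Sum>i\<in>{m..<r}. x ^ i) = x ^ m * (\<Sum>j<r - m. x ^ j)"
    by (simp add: sum.atLeastLessThan_shift_0 atLeast0LessThan power_add sum_distrib_left)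
  also have "(\<Sum>j<r - m. x ^ j) = (1 - x ^ (r - m)) / (1 - x)"
    using assms by (simp add: sum_gp_strict)
  also have "\<dots> \<le> 1 / (1 - x)"
    using assms by (simp add: divide_right_mono)
  finally show ?thesis
    using assms by (simp add: mult_left_mono)
qed

lemma upper_density_nonneg: "upper_density A \<ge> 0"
  unfolding upper_density_def by (rule le_Limsup) auto

lemma upper_density_eq_0I:
  assumes "\<And>\<delta>. \<delta> > 0 \<Longrightarrow> \<forall>\<^sub>F r in sequentially. real (card (A \<inter> {..<r})) \<le> \<delta> * real r"
  shows "upper_density A = 0"
proof (rule antisym[OF _ upper_density_nonneg])
  show "upper_density A \<le> 0"
  proof (rule ereal_le_epsilon2)
    fix \<delta> :: real
    assume "\<delta> > 0"
    from assms[OF this] eventually_gt_at_top[of 0]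
    have "\<forall>\<^sub>F r in sequentially. ereal (real (card (A \<inter> {..<r})) / real r) \<le> ereal \<delta>"
      by eventually_elim (simp add: divide_le_eq)
    then show "upper_density A \<le> 0 + ereal \<delta>"
      unfolding upper_density_def by (simp add: Limsup_bounded)
  qed
qed

lemma upper_density_geI:
  assumes "\<exists>\<^sub>F t in sequentially. \<epsilon> * real t \<le> real (card (A \<inter> {..<t}))"
  shows "ereal \<epsilon> \<le> upper_density A"
proof (rule ccontr)
  assume "\<not> ereal \<epsilon> \<le> upper_density A"
  then have "\<forall>\<^sub>F t in sequentially. ereal (real (card (A \<inter> {..<t})) / real t) < ereal \<epsilon>"
    unfolding upper_density_def using Limsup_le_iff by (metis linorder_not_le order_refl)
  with eventually_gt_at_top[of 0]
  have "\<forall>\<^sub>F t in sequentially. \<not> \<epsilon> * real t \<le> real (card (A \<inter> {..<t}))"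
    by eventually_elim (simp add: pos_divide_less_eq mult.commute)
  with assms show False
    by (simp add: not_frequently[symmetric])
qed

lemma card_UNION_sparse_lessThan_le:
  fixes S :: "nat \<Rightarrow> nat set"
  assumes finite: "\<And>i. finite (S i)"
    and start: "\<And>i. S i \<subseteq> {i..}"
    and sparse: "\<And>i r. real (card (S i \<inter> {..<r})) \<le> real r / 2 ^ i"
  shows "real (card ((\<Union>i. S i) \<inter> {..<r})) \<le> real (card (\<Union>i<m. S i)) + 2 * real r / 2 ^ m"
proof -
  have "(\<Union>i. S i) \<inter> {..<r} \<subseteq> (\<Union>i<m. S i) \<union> (\<Union>i\<in>{m..<r}. S i \<inter> {..<r})"
    using start by (force simp: not_less)
  then have "card ((\<Union>i. S i) \<inter> {..<r}) \<le> card ((\<Union>i<m. S i) \<union> (\<Union>i\<in>{m..<r}. S i \<inter> {..<r}))"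
    using finite by (intro card_mono) auto
  also have "\<dots> \<le> card (\<Union>i<m. S i) + card (\<Union>i\<in>{m..<r}. S i \<inter> {..<r})"
    by (rule card_Un_le)
  also have "\<dots> \<le> card (\<Union>i<m. S i) + (\<Sum>i\<in>{m..<r}. card (S i \<inter> {..<r}))"
    by (intro add_left_mono card_UN_le) simp
  finally have "real (card ((\<Union>i. S i) \<inter> {..<r}))
      \<le> real (card (\<Union>i<m. S i)) + (\<Sum>i\<in>{m..<r}. real (card (S i \<inter> {..<r})))"
    by (metis of_nat_add of_nat_le_iff of_nat_sum)
  also have "(\<Sum>i\<in>{m..<r}. real (card (S i \<inter> {..<r}))) \<le> real r * (\<Sum>i\<in>{m..<r}. (1 / 2) ^ i)"
    using sparse by (simp add: sum_distrib_left sum_mono power_divide)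
  also have "\<dots> \<le> real r * ((1 / 2) ^ m / (1 - 1 / 2))"
    by (intro mult_left_mono sum_power_atLeastLessThan_le) auto
  finally show ?thesis
    by (simp add: power_divide mult.commute)
qed

lemma upper_density_UNION_sparse_eq_0:
  fixes S :: "nat \<Rightarrow> nat set"
  assumes "\<And>i. finite (S i)" "\<And>i. S i \<subseteq> {i..}"
    and "\<And>i r. real (card (S i \<inter> {..<r})) \<le> real r / 2 ^ i"
  shows "upper_density (\<Union>i. S i) = 0"
proof (rule upper_density_eq_0I)
  fix \<delta> :: real
  assume "\<delta> > 0"
  then obtain m where m: "(1 / 2 :: real) ^ m < \<delta> / 4"
    using real_arch_pow_inv[of "\<delta> / 4" "1 / 2"] by auto
  define C where "C = real (card (\<Union>i<m. S i))"
  have "\<forall>\<^sub>F r in sequentially. 2 * C / \<delta> \<le> real r"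
    using filterlim_real_sequentially by (simp add: filterlim_at_top)
  then have "\<forall>\<^sub>F r in sequentially. C \<le> \<delta> / 2 * real r"
    by eventually_elim (use \<open>\<delta> > 0\<close> in \<open>simp add: field_simps\<close>)
  then show "\<forall>\<^sub>F r in sequentially. real (card ((\<Union>i. S i) \<inter> {..<r})) \<le> \<delta> * real r"
  proof eventually_elim
    case (elim r)
    have "4 \<le> \<delta> * 2 ^ m"
      using m by (simp add: power_divide field_simps)
    then have "2 * real r / 2 ^ m \<le> \<delta> / 2 * real r"
      using mult_right_mono[of 4 "\<delta> * 2 ^ m" "real r"] by (simp add: field_simps)
    with card_UNION_sparse_lessThan_le[OF assms, of r m] elim show ?case
      unfolding C_def by linarith
  qed
qed

lemma cart_power_mono: "A \<subseteq> B \<Longrightarrow> cart_power A k \<subseteq> cart_power B k"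
  unfolding cart_power_def by auto

theorem mainTheorem3:
  fixes k :: nat and f :: "nat list \<Rightarrow> nat"
  assumes "k \<ge> 1" and "bad k f"
  shows "\<not> in_C_dbar0 k f"
proof
  obtain \<epsilon> :: real where "\<epsilon> > 0" and "\<forall>i. \<exists>n t A. n \<ge> i \<and> t \<ge> i \<and> A \<subseteq> {i..<n} \<and>
      (\<forall>r. real (card (A \<inter> {..<r})) \<le> real r / 2 ^ i) \<and>
      real (card (f ` cart_power A k \<inter> {..<t})) \<ge> \<epsilon> * real t"
    using \<open>bad k f\<close> unfolding bad_def by blast
  then obtain n t S where S: "\<And>i. S i \<subseteq> {i..<n i}"
    and sparse: "\<And>i r. real (card (S i \<inter> {..<r})) \<le> real r / 2 ^ i"
    and t: "\<And>i. t i \<ge> i" and dense: "\<And>i. real (card (f ` cart_power (S i) k \<inter> {..<t i})) \<ge> \<epsilon> * real (t i)"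
    by metis
  have "finite (S i)" and "S i \<subseteq> {i..}" for i
    using S[of i] finite_subset by auto
  then have "upper_density (\<Union>i. S i) = 0"
    using sparse by (rule upper_density_UNION_sparse_eq_0)
  moreover assume "in_C_dbar0 k f"
  ultimately have "upper_density (f ` cart_power (\<Union>i. S i) k) = 0"
    unfolding in_C_dbar0_def by blast
  moreover have "ereal \<epsilon> \<le> upper_density (f ` cart_power (\<Union>i. S i) k)"
  proof (rule upper_density_geI, unfold frequently_sequentially, intro allI)
    fix j
    have "\<epsilon> * real (t j) \<le> real (card (f ` cart_power (S j) k \<inter> {..<t j}))"
      by (rule dense)
    also have "\<dots> \<le> real (card (f ` cart_power (\<Union>i. S i) k \<inter> {..<t j}))"
      by (intro of_nat_mono card_mono Int_mono image_mono cart_power_mono) auto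
    finally show "\<exists>t'\<ge>j. \<epsilon> * real t' \<le> real (card (f ` cart_power (\<Union>i. S i) k \<inter> {..<t'}))"
      using t[of j] by blast
  qed
  ultimately show False
    using \<open>\<epsilon> > 0\<close> by simp
qed

end
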